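(* Let $\gamma\in\mathbb{R}$ and $1<p<+\infty$. There exists a constant $C>0$ such that, whenever $\omega\in C(\mathbb{R}_+\times\mathbb{R}_+,[0,+\infty))$ is such that every $u\in C^\infty_c(\mathbb{R}_+)$ satisfies, for almost every $x,y\in\mathbb{R}_+$, \[ |u(x)-u(y)|\le\omega(x,y)\Big(\int_{\mathbb{R}_+}|u'(z)|^pz^\gamma\,dz\Big)^{1/p}, \] then for all $x,y\in\mathbb{R}_+$, $\omega(x,y)\ge C\,\Theta_{1-\frac1p,\,1-\frac1p,\,1-\frac{1+\gamma}{p}}(x,y)$.
   Context: $\mathbb{R}_+=(0,+\infty)$ (the case $n=1$ of $\mathbb{R}^n_+$, so $x_n=x$). For $\alpha>0$, $\beta,\kappa\in\mathbb{R}$ and $x,y\in\mathbb{R}_+$: $\Theta_{\alpha,\beta,\kappa}(x,y)=\frac{|x-y|^\beta}{\min(x,y)^{-\kappa}\max(x,y,|x-y|)^\beta}$ if $\kappa<0$; $=\big(\ln(1+(|x-y|/\min(x,y))^{\beta/\alpha})\big)^\alpha$ if $\kappa=0$; $=\frac{|x-y|^\beta}{\max(x,y,|x-y|)^{\beta-\kappa}}$ if $0<\kappa<1+\beta-\alpha$; $=\frac{\max(x,y)^\kappa|x-y|^\beta}{\max(x,y,|x-y|)^\beta}$ if $\kappa\ge 1+\beta-\alpha$. *)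

theory Defs
  imports "HOL-Analysis.Analysis"
begin

definition Theta :: "real \<Rightarrow> real \<Rightarrow> real \<Rightarrow> real \<Rightarrow> real \<Rightarrow> real" where
  "Theta \<alpha> \<beta> \<kappa> x y =
     (if \<kappa> < 0 then
        \<bar>x - y\<bar> powr \<beta> / (min x y powr (- \<kappa>) * max (max x y) \<bar>x - y\<bar> powr \<beta>)
      else if \<kappa> = 0 then
        (ln (1 + (\<bar>x - y\<bar> / min x y) powr (\<beta> / \<alpha>))) powr \<alpha>
      else if \<kappa> < 1 + \<beta> - \<alpha> then
        \<bar>x - y\<bar> powr \<beta> / max (max x y) \<bar>x - y\<bar> powr (\<beta> - \<kappa>)
      else
        max x y powr \<kappa> * \<bar>x - y\<bar> powr \<beta> / max (max x y) \<bar>x - y\<bar> powr \<beta>)"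

definition smooth_fun :: "(real \<Rightarrow> real) \<Rightarrow> bool" where
  "smooth_fun u \<longleftrightarrow> (\<forall>k x. ((deriv ^^ k) u) differentiable (at x))"

definition Cc_inf_pos :: "(real \<Rightarrow> real) set" where
  "Cc_inf_pos = {u. smooth_fun u \<and>
      (\<exists>a b. 0 < a \<and> a \<le> b \<and> (\<forall>x. x \<notin> {a..b} \<longrightarrow> u x = 0))}"

end

theory Submission
  imports Defs "HOL-Computational_Algebra.Polynomial"
begin

(* Test the inequality with u(t) = phi((ln t - c)/w), where phi(s) = exp(-1/(s(1-s))) is the
   standard bump on (0,1) and M bounds |phi'|. Then u lives on the logarithmic window
   [e^c, e^(c+w)], equals e^(-4) at its centre x0 = e^(c+w/2), and |u'(t)| <= M/(w t). On the
   window t^(1+gamma-p) is within a factor e^(|1+gamma-p| w/2) of x0^(1+gamma-p), so with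
   kappa = 1 - (1+gamma)/p the p-th root of the weighted energy of u is at most
   M w^(1/p-1) x0^(-kappa) e^(|kappa| w/2). Continuity of omega turns the a.e. inequality into a
   pointwise one; hence omega(x,y) >= e^(-4) w^(1-1/p) x0^kappa / (M e^(|kappa| w/2)) whenever
   one of x, y is the centre and |ln x - ln y| >= w. For a < b, centre the window at a if
   kappa <= 0 and at b if kappa > 0, with width ln(b/a) if kappa = 0 and min(ln(b/a), 1)
   otherwise; since (b-a)/b <= min(ln(b/a), 1), this bound dominates a multiple of Theta. *)

section \<open>A derivative-closed family of bump functions\<close>

lemma power_div_fact_le_exp:
  fixes x :: real
  assumes "0 \<le> x"
  shows "x ^ m / fact m \<le> exp x"
proof -
  have "(\<lambda>k. if k = m then x ^ m / fact m else 0) sums (x ^ m / fact m)"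
    by (rule sums_single)
  moreover have "(\<lambda>k. x ^ k / fact k) sums exp x"
    using exp_converges[of x] by (simp add: divide_inverse_commute scaleR_conv_of_real)
  ultimately show ?thesis
    by (rule sums_le[rotated]) (use assms in auto)
qed

(* Derivatives of phi, and of phi((ln t - c)/w) times powers of t, stay in the families
   rational_bump and log_bump below; this is how smoothness of the test function is proved. *)
definition rational_bump :: "real poly \<Rightarrow> nat \<Rightarrow> real \<Rightarrow> real" where
  "rational_bump P n s =
     (if 0 < s \<and> s < 1 then poly P s / (s*(1-s))^n * exp (-1/(s*(1-s))) else 0)"

(* With q = s(1-s):  (P q^-n e^(-1/q))' = (P' q^2 - n P q q' + P q') q^-(n+2) e^(-1/q). *)
definition rational_bump_deriv :: "real poly \<Rightarrow> nat \<Rightarrow> real poly" where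
  "rational_bump_deriv P n =
     pderiv P * [:0,1,-1:]^2 - smult (real n) (P * [:0,1,-1:] * [:1,-2:]) + P * [:1,-2:]"

lemma poly_rational_bump_deriv:
  "poly (rational_bump_deriv P n) s = poly (pderiv P) s * (s*(1-s))^2
     - real n * poly P s * (s*(1-s)) * (1 - 2 * s) + poly P s * (1 - 2 * s)"
  by (simp add: rational_bump_deriv_def algebra_simps power2_eq_square)

lemma rational_bump_deriv_identity:
  fixes q e A B L :: real
  assumes q: "q > 0"
  shows "(A*q^n - B*(real n*q^(n-1)*L))/(q^n)^2 * e + B/q^n*(e*(L/q^2))
     = (A*q^2 - real n*B*q*L + B*L)/q^(n+2)*e"
proof (cases n)
  case 0 then show ?thesis using q by (simp add: field_simps power2_eq_square)
next
  case (Suc m)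
  then show ?thesis using q by (simp add: field_simps power2_eq_square)
qed

lemma has_real_derivative_rational_bump_inside:
  assumes "0 < s" "s < 1"
  shows "(rational_bump P n has_real_derivative
            rational_bump (rational_bump_deriv P n) (n+2) s) (at s)"
proof -
  define q where "q = s*(1-s)"
  have q: "q > 0" using assms by (simp add: q_def)
  have dq: "((\<lambda>s. s*(1-s)) has_real_derivative (1 - 2 * s)) (at s)"
    by (auto intro!: derivative_eq_intros)
  have dqn: "((\<lambda>s. (s*(1-s))^n) has_real_derivative (real n * q^(n-1) * (1 - 2 * s))) (at s)"
    using DERIV_power[OF dq, of n] by (simp add: q_def mult_ac)
  have dexp: "((\<lambda>s. exp (-1/(s*(1-s)))) has_real_derivative exp (-1/q) * ((1 - 2 * s)/q^2)) (at s)"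
    using q unfolding q_def
    by (auto intro!: derivative_eq_intros)
       (simp add: divide_simps power2_eq_square; simp add: algebra_simps)
  have dquot: "((\<lambda>s. poly P s / (s*(1-s))^n) has_real_derivative
      (poly (pderiv P) s * q^n - poly P s * (real n * q^(n-1) * (1 - 2 * s))) / (q^n)^2) (at s)"
    using DERIV_divide[OF poly_DERIV dqn, of P] q assms by (simp add: q_def power2_eq_square)
  have dprod: "((\<lambda>s. poly P s / (s*(1-s))^n * exp (-1/(s*(1-s)))) has_real_derivative
      (poly (pderiv P) s * q^n - poly P s * (real n * q^(n-1) * (1 - 2 * s))) / (q^n)^2 * exp (-1/q)
      + poly P s / q^n * (exp (-1/q) * ((1 - 2 * s)/q^2))) (at s)"
    using DERIV_mult[OF dquot dexp] by (simp only: q_def mult.commute)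
  have eq: "(poly (pderiv P) s * q^n - poly P s * (real n * q^(n-1) * (1 - 2 * s))) / (q^n)^2
        * exp (-1/q) + poly P s / q^n * (exp (-1/q) * ((1 - 2 * s)/q^2))
      = rational_bump (rational_bump_deriv P n) (n+2) s"
    unfolding rational_bump_def poly_rational_bump_deriv
    using assms rational_bump_deriv_identity[OF q] by (simp add: q_def)
  show ?thesis
    by (rule has_field_derivative_transform_within_open[of _ _ _ "{0<..<1}"])
       (use dprod eq assms in \<open>auto simp: rational_bump_def\<close>)
qed

lemma abs_rational_bump_le_square:
  "\<exists>K\<ge>0. \<forall>t. 0 < t \<and> t < 1 \<longrightarrow> \<bar>rational_bump P n t\<bar> \<le> K * (t*(1-t))^2"
proof -
  have "compact (poly P ` {0..1})"
    by (intro compact_continuous_image continuous_intros) auto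
  then obtain B where B: "\<And>t. t \<in> {0..1} \<Longrightarrow> \<bar>poly P t\<bar> \<le> B"
    using compact_imp_bounded bounded_iff by (metis image_eqI real_norm_def)
  have B0: "B \<ge> 0" using B[of 0] by simp
  show ?thesis
  proof (intro exI[of _ "B * fact (n+2)"] conjI allI impI)
    show "0 \<le> B * fact (n+2)" using B0 by simp
    fix t :: real assume t: "0 < t \<and> t < 1"
    define q where "q = t*(1-t)"
    have q: "q > 0" using t by (simp add: q_def)
    have "(1/q)^(n+2) / fact (n+2) \<le> exp (1/q)"
      by (rule power_div_fact_le_exp) (use q in simp)
    then have "1 \<le> exp (1/q) * (q^(n+2) * fact (n+2))"
      using q by (simp add: power_one_over divide_le_eq)
    then have "1 / exp (1/q) \<le> fact (n+2) * q^(n+2)"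
      by (simp add: divide_le_eq mult_ac)
    then have flat: "exp (-1/q) \<le> fact (n+2) * q^(n+2)"
      by (simp add: exp_minus divide_inverse)
    have "\<bar>rational_bump P n t\<bar> = \<bar>poly P t\<bar> / q^n * exp (-1/q)"
      using t q by (simp add: rational_bump_def q_def abs_mult)
    also have "\<dots> \<le> B / q^n * (fact (n+2) * q^(n+2))"
      using B[of t] t q flat B0 by (intro mult_mono divide_right_mono) auto
    also have "\<dots> = B * fact (n+2) * q^2"
      using q by (simp add: power_add field_simps power2_eq_square del: fact_Suc)
    finally show "\<bar>rational_bump P n t\<bar> \<le> B * fact (n+2) * (t*(1-t))^2" by (simp add: q_def)
  qed
qed

lemma has_real_derivative_0_if_abs_le_square:
  fixes f :: "real \<Rightarrow> real"
  assumes le: "\<And>y. \<bar>f y\<bar> \<le> K * (y - s)^2"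
  shows "(f has_real_derivative 0) (at s)"
proof -
  have s0: "f s = 0" using le[of s] by simp
  have quotient_le: "norm ((f y - f s) / (y - s)) \<le> K * \<bar>y - s\<bar>" if "y \<noteq> s" for y
  proof -
    have "norm ((f y - f s) / (y - s)) = \<bar>f y\<bar> / \<bar>y - s\<bar>" using s0 by (simp add: abs_divide)
    also have "\<dots> \<le> K * (\<bar>y - s\<bar> * \<bar>y - s\<bar>) / \<bar>y - s\<bar>"
      using le[of y] by (intro divide_right_mono) (auto simp: power2_eq_square)
    also have "\<dots> = K * \<bar>y - s\<bar>"
      using that by (metis mult.assoc abs_eq_0 eq_iff_diff_eq_0 nonzero_mult_div_cancel_right)
    finally show ?thesis .
  qed
  have "((\<lambda>y. (f y - f s) / (y - s)) \<longlongrightarrow> 0) (at s)"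
  proof (rule Lim_null_comparison)
    show "\<forall>\<^sub>F y in at s. norm ((f y - f s) / (y - s)) \<le> K * \<bar>y - s\<bar>"
      using quotient_le by (auto simp: eventually_at_filter)
    have "((\<lambda>y. K * \<bar>y - s\<bar>) \<longlongrightarrow> K * \<bar>s - s\<bar>) (at s)"
      by (intro tendsto_intros)
    then show "((\<lambda>y. K * \<bar>y - s\<bar>) \<longlongrightarrow> 0) (at s)" by simp
  qed
  then show ?thesis by (simp add: has_field_derivative_iff)
qed

lemma abs_rational_bump_le_dist_square:
  assumes "\<not> (0 < s \<and> s < 1)"
  shows "\<exists>K. \<forall>y. \<bar>rational_bump P n y\<bar> \<le> K * (y - s)^2"
proof -
  obtain K where K: "K \<ge> 0" "\<And>t. 0 < t \<and> t < 1 \<Longrightarrow> \<bar>rational_bump P n t\<bar> \<le> K * (t*(1-t))^2"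
    using abs_rational_bump_le_square by blast
  have "\<bar>rational_bump P n y\<bar> \<le> K * (y - s)^2" for y
  proof (cases "0 < y \<and> y < 1")
    case True
    have sq: "0 \<le> y*y" "0 \<le> (1-y)*(1-y)" by simp_all
    have expand: "y*(1-y) = y - y*y" "(1-y)*(1-y) = 1 - 2*y + y*y" by (simp_all add: algebra_simps)
    have "y*(1-y) \<le> \<bar>y - s\<bar>"
    proof (cases "s \<le> 0")
      case True
      then show ?thesis using expand sq by linarith
    next
      case False
      then have "s \<ge> 1" using assms \<open>0 < y \<and> y < 1\<close> by linarith
      then show ?thesis using expand sq \<open>0 < y \<and> y < 1\<close> by linarith
    qed
    then show ?thesis
      using K(2)[OF True] mult_left_mono[OF power_mono[of _ _ 2] K(1)] True by fastforce
  next
    case False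
    then have "rational_bump P n y = 0" by (auto simp: rational_bump_def)
    then show ?thesis using K(1) by simp
  qed
  then show ?thesis by blast
qed

lemma has_real_derivative_rational_bump:
  "(rational_bump P n has_real_derivative rational_bump (rational_bump_deriv P n) (n+2) s) (at s)"
proof (cases "0 < s \<and> s < 1")
  case True
  then show ?thesis using has_real_derivative_rational_bump_inside by blast
next
  case False
  then obtain K where K: "\<And>y. \<bar>rational_bump P n y\<bar> \<le> K * (y - s)^2"
    using abs_rational_bump_le_dist_square by blast
  have "rational_bump (rational_bump_deriv P n) (n+2) s = 0"
    using False by (auto simp: rational_bump_def)
  with has_real_derivative_0_if_abs_le_square[OF K] show ?thesis by simp
qed

lemma rational_bump_bounded: "\<exists>K. \<forall>t. \<bar>rational_bump P n t\<bar> \<le> K"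
proof -
  obtain K where K: "K \<ge> 0" "\<And>t. 0 < t \<and> t < 1 \<Longrightarrow> \<bar>rational_bump P n t\<bar> \<le> K * (t*(1-t))^2"
    using abs_rational_bump_le_square by blast
  have "\<bar>rational_bump P n t\<bar> \<le> K" for t
  proof (cases "0 < t \<and> t < 1")
    case True
    have "(t*(1-t))^2 \<le> 1" using True by (intro power_le_one) (auto simp: mult_le_one)
    then show ?thesis using K(2)[OF True] mult_left_mono[OF _ K(1)] by fastforce
  qed (use K in \<open>auto simp: rational_bump_def\<close>)
  then show ?thesis by blast
qed

lemma rational_bump_add: "rational_bump P n s + rational_bump R n s = rational_bump (P + R) n s"
  by (simp add: rational_bump_def add_divide_distrib distrib_right)

lemma rational_bump_smult: "a * rational_bump P n s = rational_bump (smult a P) n s"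
  by (simp add: rational_bump_def)

lemma rational_bump_raise_order: "rational_bump P n s = rational_bump (P * [:0,1,-1:]^2) (n+2) s"
proof (cases "0 < s \<and> s < 1")
  case True
  then have q: "s*(1-s) > 0" by simp
  have "poly ([:0,1,-1:]^2) s = (s*(1-s))^2" by (simp add: algebra_simps power2_eq_square)
  moreover have "x * q^2 / q^(n+2) = x / q^n" if "q > 0" for x q :: real
    using that by (simp add: power_add power2_eq_square field_simps)
  ultimately show ?thesis using True q by (simp add: rational_bump_def)
qed (auto simp: rational_bump_def)

definition log_bump :: "real \<Rightarrow> real \<Rightarrow> real poly \<Rightarrow> nat \<Rightarrow> real \<Rightarrow> real \<Rightarrow> real" where
  "log_bump c w P n m t = (if t > 0 then rational_bump P n ((ln t - c)/w) * t powr m else 0)"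

definition log_bump_deriv :: "real \<Rightarrow> real poly \<Rightarrow> nat \<Rightarrow> real \<Rightarrow> real poly" where
  "log_bump_deriv w P n m = smult (1/w) (rational_bump_deriv P n) + smult m (P * [:0,1,-1:]^2)"

lemma log_bump_eq_0_outside:
  assumes "w > 0" and "t \<notin> {exp c<..<exp (c+w)}"
  shows "log_bump c w P n m t = 0"
proof (cases "t > 0")
  case True
  have "\<not> (0 < (ln t - c)/w \<and> (ln t - c)/w < 1)"
  proof
    assume "0 < (ln t - c)/w \<and> (ln t - c)/w < 1"
    then have "c < ln t" "ln t < c + w" using assms(1) by (auto simp: field_simps)
    then have "exp c < t" "t < exp (c+w)" using True by (metis exp_less_cancel_iff exp_ln)+
    then show False using assms(2) by auto
  qed
  then show ?thesis by (auto simp: log_bump_def rational_bump_def)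
qed (simp add: log_bump_def)

lemma has_real_derivative_log_bump:
  assumes w: "w > 0"
  shows "(log_bump c w P n m has_real_derivative
            log_bump c w (log_bump_deriv w P n m) (n+2) (m-1) t) (at t)"
proof (cases "t > 0")
  case True
  define s where "s = (ln t - c)/w"
  define D where "D = rational_bump (rational_bump_deriv P n) (n+2) s"
  have ds: "((\<lambda>t. (ln t - c)/w) has_real_derivative 1/(w*t)) (at t)"
    using True w by (auto intro!: derivative_eq_intros simp: field_simps)
  have dbump: "((\<lambda>t. rational_bump P n ((ln t - c)/w)) has_real_derivative D * (1/(w*t))) (at t)"
    using DERIV_chain2[OF has_real_derivative_rational_bump ds] by (simp add: s_def D_def)
  have dprod: "((\<lambda>t. rational_bump P n ((ln t - c)/w) * t powr m) has_real_derivative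
      D * (1/(w*t)) * t powr m + m * t powr (m-1) * rational_bump P n s) (at t)"
    using DERIV_mult[OF dbump has_real_derivative_powr[OF True]] by (simp only: s_def)
  have tp: "t powr m = t * t powr (m-1)" using True by (simp add: powr_diff)
  have "D * (1/(w*t)) * t powr m + m * t powr (m-1) * rational_bump P n s
      = (1/w * D + m * rational_bump P n s) * t powr (m-1)"
    unfolding tp using True w by (simp add: field_simps)
  also have "\<dots> = (1/w * D + m * rational_bump (P * [:0,1,-1:]^2) (n+2) s) * t powr (m-1)"
    by (subst rational_bump_raise_order[of P n s]) (rule refl)
  also have "\<dots> = log_bump c w (log_bump_deriv w P n m) (n+2) (m-1) t"
  proof -
    have "1/w * D + m * rational_bump (P * [:0,1,-1:]^2) (n+2) s
        = rational_bump (log_bump_deriv w P n m) (n+2) s"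
      unfolding D_def log_bump_deriv_def rational_bump_smult rational_bump_add by (rule refl)
    then show ?thesis using True by (simp add: log_bump_def s_def)
  qed
  finally have eq: "D * (1/(w*t)) * t powr m + m * t powr (m-1) * rational_bump P n s
      = log_bump c w (log_bump_deriv w P n m) (n+2) (m-1) t" .
  show ?thesis
    by (rule has_field_derivative_transform_within_open[of _ _ _ "{0<..}"])
       (use dprod eq True in \<open>auto simp: log_bump_def\<close>)
next
  case False
  have z: "log_bump c w (log_bump_deriv w P n m) (n+2) (m-1) t = 0"
    using False by (simp add: log_bump_def)
  have vanish: "0 = log_bump c w P n m x" if "x \<in> {..<exp c}" for x
    using that log_bump_eq_0_outside[OF w, of x c] by auto
  have "((\<lambda>x. 0) has_real_derivative 0) (at t)" by simp
  then show ?thesis unfolding z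
    by (rule has_field_derivative_transform_within_open[of _ _ _ "{..<exp c}"])
       (use False vanish le_less_trans[OF _ exp_gt_zero[of c], of t] in auto)
qed

lemma deriv_log_bump:
  "w > 0 \<Longrightarrow> deriv (log_bump c w P n m) = log_bump c w (log_bump_deriv w P n m) (n+2) (m-1)"
  using has_real_derivative_log_bump DERIV_imp_deriv by blast

lemma higher_deriv_log_bump:
  "w > 0 \<Longrightarrow> \<exists>P' n' m'. (deriv ^^ k) (log_bump c w P n m) = log_bump c w P' n' m'"
proof (induction k)
  case (Suc k)
  then obtain P' n' m' where "(deriv ^^ k) (log_bump c w P n m) = log_bump c w P' n' m'" by blast
  then show ?case using deriv_log_bump[OF Suc.prems] by auto
qed auto

lemma smooth_fun_log_bump:
  assumes "w > 0"
  shows "smooth_fun (log_bump c w P n m)"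
  unfolding smooth_fun_def
proof (intro allI)
  fix k x
  obtain P' n' m' where "(deriv ^^ k) (log_bump c w P n m) = log_bump c w P' n' m'"
    using higher_deriv_log_bump[OF assms] by blast
  then show "(deriv ^^ k) (log_bump c w P n m) differentiable at x"
    using has_real_derivative_log_bump[OF assms] real_differentiable_def by metis
qed

lemma smooth_fun_imp_continuous_on: "smooth_fun u \<Longrightarrow> continuous_on UNIV u"
  unfolding smooth_fun_def
  by (metis continuous_at_imp_continuous_on differentiable_imp_continuous_within funpow_0)

lemma smooth_fun_imp_continuous_on_deriv: "smooth_fun u \<Longrightarrow> continuous_on UNIV (deriv u)"
  unfolding smooth_fun_def
  by (metis continuous_at_imp_continuous_on differentiable_imp_continuous_within
      funpow.simps(2) funpow_0 o_apply)

section \<open>The test function and its weighted energy\<close>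

definition window_bump :: "real \<Rightarrow> real \<Rightarrow> real \<Rightarrow> real" where
  "window_bump c w = log_bump c w 1 0 0"

definition bump_slope :: real where
  "bump_slope = max 1 (SOME K. \<forall>t. \<bar>rational_bump (rational_bump_deriv 1 0) 2 t\<bar> \<le> K)"

lemma bump_slope_ge_1: "1 \<le> bump_slope"
  by (simp add: bump_slope_def)

lemma abs_rational_bump_le_bump_slope: "\<bar>rational_bump (rational_bump_deriv 1 0) 2 t\<bar> \<le> bump_slope"
proof -
  have "\<forall>t. \<bar>rational_bump (rational_bump_deriv 1 0) 2 t\<bar>
          \<le> (SOME K. \<forall>t. \<bar>rational_bump (rational_bump_deriv 1 0) 2 t\<bar> \<le> K)"
    using someI_ex[OF rational_bump_bounded] .
  then show ?thesis unfolding bump_slope_def by (meson max.coboundedI2)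
qed

lemma window_bump_in_Cc_inf_pos: "w > 0 \<Longrightarrow> window_bump c w \<in> Cc_inf_pos"
  unfolding Cc_inf_pos_def window_bump_def
  by (intro CollectI conjI smooth_fun_log_bump exI[of _ "exp c"] exI[of _ "exp (c+w)"])
     (auto intro: log_bump_eq_0_outside)

lemma window_bump_centre: "w > 0 \<Longrightarrow> window_bump c w (exp (c + w/2)) = exp (-4)"
  by (simp add: window_bump_def log_bump_def rational_bump_def)

lemma window_bump_eq_0_outside:
  "w > 0 \<Longrightarrow> t \<notin> {exp c<..<exp (c+w)} \<Longrightarrow> window_bump c w t = 0"
  unfolding window_bump_def by (rule log_bump_eq_0_outside)

lemma deriv_window_bump:
  "w > 0 \<Longrightarrow> deriv (window_bump c w) = log_bump c w (log_bump_deriv w 1 0 0) 2 (-1)"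
  unfolding window_bump_def by (simp add: deriv_log_bump numeral_2_eq_2)

lemma abs_deriv_window_bump_le:
  assumes "w > 0" "t > 0"
  shows "\<bar>deriv (window_bump c w) t\<bar> \<le> bump_slope / (w * t)"
proof -
  have "deriv (window_bump c w) t
      = rational_bump (rational_bump_deriv 1 0) 2 ((ln t - c)/w) / (w * t)"
    using assms
    by (simp add: deriv_window_bump log_bump_def log_bump_deriv_def powr_minus divide_inverse
        flip: rational_bump_smult)
  then show ?thesis
    using abs_rational_bump_le_bump_slope assms by (simp add: abs_divide divide_right_mono)
qed

definition weighted_energy :: "real \<Rightarrow> real \<Rightarrow> (real \<Rightarrow> real) \<Rightarrow> real" where
  "weighted_energy p \<gamma> u = integral {0<..} (\<lambda>t. \<bar>deriv u t\<bar> powr p * t powr \<gamma>)"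

lemma weighted_energy_nonneg: "0 \<le> weighted_energy p \<gamma> u"
  unfolding weighted_energy_def
  by (cases "(\<lambda>t. \<bar>deriv u t\<bar> powr p * t powr \<gamma>) integrable_on {0<..}")
     (simp_all add: integral_nonneg not_integrable_integral)

lemma has_integral_inverse_ln:
  fixes a b :: real
  assumes "0 < a" "a \<le> b"
  shows "((\<lambda>t. 1/t) has_integral (ln b - ln a)) {a..b}"
proof (rule fundamental_theorem_of_calculus[OF assms(2)])
  fix x assume "x \<in> {a..b}"
  then have "x > 0" using assms(1) by auto
  then show "(ln has_vector_derivative 1/x) (at x within {a..b})"
    by (auto intro!: derivative_eq_intros simp flip: has_real_derivative_iff_has_vector_derivative)
qed

lemma weighted_energy_window_bump_le:
  assumes w: "w > 0" and p: "p > 0"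
    and K: "\<And>t. t \<in> {exp c..exp (c+w)} \<Longrightarrow> t powr (1 + \<gamma> - p) \<le> K"
  shows "weighted_energy p \<gamma> (window_bump c w) \<le> bump_slope powr p * w powr (1-p) * K"
proof -
  define a where "a = exp c"
  define b where "b = exp (c+w)"
  define g where "g = (\<lambda>t. \<bar>deriv (window_bump c w) t\<bar> powr p * t powr \<gamma>)"
  have a0: "a > 0" and ab: "a \<le> b" using w by (simp_all add: a_def b_def)
  have g0: "g t = 0" if "t \<notin> {a..b}" for t
    using that p log_bump_eq_0_outside[OF w, of t c]
    by (auto simp: g_def a_def b_def deriv_window_bump[OF w])
  have "continuous_on {a..b} g"
    unfolding g_def
  proof (intro continuous_on_mult continuous_on_powr' continuous_on_rabs continuous_on_id
      continuous_on_const)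
    show "continuous_on {a..b} (deriv (window_bump c w))"
      using smooth_fun_imp_continuous_on_deriv window_bump_in_Cc_inf_pos[OF w]
      by (auto simp: Cc_inf_pos_def intro: continuous_on_subset)
  qed (use p a0 in auto)
  then have gi: "g integrable_on {a..b}" by (rule integrable_continuous_interval)
  have "(g has_integral integral {a..b} g) {0<..}"
    by (rule has_integral_on_superset[OF integrable_integral[OF gi]]) (use g0 a0 in auto)
  then have energy_eq: "weighted_energy p \<gamma> (window_bump c w) = integral {a..b} g"
    unfolding weighted_energy_def g_def by (rule integral_unique)
  define h where "h = (\<lambda>t. (bump_slope/w) powr p * K * (1/t))"
  have hI: "(h has_integral ((bump_slope/w) powr p * K * (ln b - ln a))) {a..b}"
    unfolding h_def by (rule has_integral_mult_right[OF has_integral_inverse_ln[OF a0 ab]])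
  have gh: "g t \<le> h t" if t: "t \<in> {a..b}" for t
  proof -
    have t0: "t > 0" using t a0 by auto
    have "g t \<le> (bump_slope/(w*t)) powr p * t powr \<gamma>"
      unfolding g_def using abs_deriv_window_bump_le[OF w t0] p
      by (intro mult_right_mono powr_mono2) auto
    also have "\<dots> = (bump_slope/w) powr p * (t powr (1 + \<gamma> - p) / t)"
    proof -
      have "(bump_slope/(w*t)) powr p = (bump_slope/w) powr p / t powr p"
        by (simp add: powr_divide[symmetric] divide_divide_eq_left)
      moreover have "t powr (1 + \<gamma> - p) / t = t powr \<gamma> / t powr p"
        using t0 by (simp add: powr_diff powr_add)
      ultimately show ?thesis by simp
    qed
    also have "\<dots> \<le> (bump_slope/w) powr p * (K / t)"
      using K[of t] t t0 by (intro mult_left_mono divide_right_mono) (auto simp: a_def b_def)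
    finally show ?thesis by (simp add: h_def)
  qed
  have "integral {a..b} g \<le> integral {a..b} h"
    using gi hI gh by (intro integral_le) (auto simp: integrable_on_def)
  also have "\<dots> = bump_slope powr p * w powr (1-p) * K"
    using w integral_unique[OF hI] by (simp add: a_def b_def powr_divide powr_diff)
  finally show ?thesis using energy_eq by simp
qed

lemma powr_le_powr_exp_abs_ln_diff:
  fixes s t x h :: real
  assumes "0 < t" "0 < x" "\<bar>ln t - ln x\<bar> \<le> h"
  shows "t powr s \<le> x powr s * exp (\<bar>s\<bar> * h)"
proof -
  have "s * (ln t - ln x) \<le> \<bar>s\<bar> * \<bar>ln t - ln x\<bar>" by (metis abs_ge_self abs_mult)
  also have "\<dots> \<le> \<bar>s\<bar> * h" using assms(3) by (intro mult_left_mono) auto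
  finally have "s * ln t \<le> s * ln x + \<bar>s\<bar> * h" by (simp add: algebra_simps)
  then have "exp (s * ln t) \<le> exp (s * ln x + \<bar>s\<bar> * h)" by simp
  then show ?thesis using assms(1,2) by (simp add: powr_def exp_add)
qed

lemma weighted_energy_window_bump_root_le:
  fixes p \<gamma> c w :: real
  assumes p: "p > 0" and w: "w > 0"
  defines "\<kappa> \<equiv> 1 - (1 + \<gamma>)/p"
  shows "weighted_energy p \<gamma> (window_bump c w) powr (1/p)
           \<le> bump_slope * w powr (1/p - 1) * exp (- \<kappa> * (c + w/2) + \<bar>\<kappa>\<bar> * w/2)"
proof -
  have slope: "bump_slope > 0" using bump_slope_ge_1 by linarith
  have weight_exponent: "1 + \<gamma> - p = - p * \<kappa>"
    using p by (simp add: \<kappa>_def field_simps)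
  define K where "K = exp (c + w/2) powr (1 + \<gamma> - p) * exp (\<bar>1 + \<gamma> - p\<bar> * (w/2))"
  have "t powr (1 + \<gamma> - p) \<le> K" if t: "t \<in> {exp c..exp (c+w)}" for t
  proof -
    have t0: "t > 0" using t by (auto intro: less_le_trans[OF exp_gt_zero])
    have "c \<le> ln t" using t t0 ln_ge_iff by auto
    moreover have "ln t \<le> c + w" using t t0 by (metis atLeastAtMost_iff exp_ln exp_le_cancel_iff)
    ultimately have "\<bar>ln t - ln (exp (c + w/2))\<bar> \<le> w/2"
      unfolding ln_exp abs_le_iff by linarith
    then show ?thesis
      unfolding K_def by (rule powr_le_powr_exp_abs_ln_diff[OF t0 exp_gt_zero])
  qed
  then have "weighted_energy p \<gamma> (window_bump c w) powr (1/p)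
               \<le> (bump_slope powr p * w powr (1-p) * K) powr (1/p)"
    using weighted_energy_window_bump_le[OF w p] weighted_energy_nonneg p by (intro powr_mono2) auto
  also have "bump_slope powr p * w powr (1-p) * K
      = exp (p * ln bump_slope + (1-p) * ln w + (- p * \<kappa> * (c + w/2) + p * \<bar>\<kappa>\<bar> * (w/2)))"
  proof -
    have "K = exp (- p * \<kappa> * (c + w/2) + p * \<bar>\<kappa>\<bar> * (w/2))"
      using p unfolding K_def weight_exponent by (simp add: powr_def abs_mult mult_exp_exp)
    then show ?thesis using slope w by (simp add: powr_def mult_exp_exp)
  qed
  also have "\<dots> powr (1/p) = exp (ln bump_slope + (1/p - 1) * ln w + (- \<kappa> * (c + w/2) + \<bar>\<kappa>\<bar> * w/2))"
    using p unfolding exp_powr_real by (simp add: field_simps)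
  also have "\<dots> = bump_slope * w powr (1/p - 1) * exp (- \<kappa> * (c + w/2) + \<bar>\<kappa>\<bar> * w/2)"
    using slope w by (simp add: powr_def exp_add)
  finally show ?thesis .
qed

section \<open>Pointwise lower bounds for the modulus\<close>

lemma AE_lborel_nonpos_imp_nonpos_on_open:
  fixes F :: "'a::euclidean_space \<Rightarrow> real"
  assumes S: "open S" and F: "continuous_on S F" and AE: "AE z in lborel. z \<in> S \<longrightarrow> F z \<le> 0"
    and z: "z \<in> S"
  shows "F z \<le> 0"
proof -
  define U where "U = S \<inter> F -` {0<..}"
  have closed: "closed (- U)"
    unfolding U_def by (intro closed_Compl continuous_open_preimage[OF F S open_greaterThan])
  have "AE z in lborel. z \<in> S \<longrightarrow> z \<in> - U"
    using AE by eventually_elim (auto simp: U_def)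
  then have "AE z in lebesgue. z \<in> S \<longrightarrow> z \<in> - U"
    by (rule AE_completion)
  with closed have "z \<in> - U"
    by (rule mem_closed_if_AE_lebesgue_open[OF S _ _ z])
  then show ?thesis using z by (auto simp: U_def)
qed

definition sobolev_modulus :: "real \<Rightarrow> real \<Rightarrow> (real \<Rightarrow> real \<Rightarrow> real) \<Rightarrow> bool" where
  "sobolev_modulus p \<gamma> \<omega> \<longleftrightarrow> (\<forall>u \<in> Cc_inf_pos. AE z in lborel. z \<in> {0<..} \<times> {0<..} \<longrightarrow>
      \<bar>u (fst z) - u (snd z)\<bar> \<le> \<omega> (fst z) (snd z) * weighted_energy p \<gamma> u powr (1/p))"

lemma sobolev_modulus_pointwise:
  assumes modulus: "sobolev_modulus p \<gamma> \<omega>"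
    and cont: "continuous_on ({0<..} \<times> {0<..}) (\<lambda>(x, y). \<omega> x y)"
    and u: "u \<in> Cc_inf_pos" and "0 < x" "0 < y"
  shows "\<bar>u x - u y\<bar> \<le> \<omega> x y * weighted_energy p \<gamma> u powr (1/p)"
proof -
  define S :: "(real \<times> real) set" where "S = {0<..} \<times> {0<..}"
  define F where
    "F z = \<bar>u (fst z) - u (snd z)\<bar> - \<omega> (fst z) (snd z) * weighted_energy p \<gamma> u powr (1/p)"
    for z
  have "continuous_on UNIV u"
    using u smooth_fun_imp_continuous_on by (auto simp: Cc_inf_pos_def)
  then have "continuous_on S (\<lambda>z. u (fst z))" "continuous_on S (\<lambda>z. u (snd z))"
    using continuous_on_compose2[OF _ continuous_on_fst[OF continuous_on_id]]
      continuous_on_compose2[OF _ continuous_on_snd[OF continuous_on_id]] by blast+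
  moreover have "continuous_on S (\<lambda>z. \<omega> (fst z) (snd z))"
    using cont by (simp add: S_def case_prod_beta')
  ultimately have "continuous_on S F"
    unfolding F_def
    by (intro continuous_on_diff continuous_on_rabs continuous_on_mult continuous_on_const)
  moreover have "AE z in lborel. z \<in> S \<longrightarrow> F z \<le> 0"
    using modulus u unfolding sobolev_modulus_def S_def F_def by auto
  moreover have "(x, y) \<in> S"
    using assms(4,5) by (simp add: S_def)
  ultimately have "F (x, y) \<le> 0"
    by (intro AE_lborel_nonpos_imp_nonpos_on_open[of S]) (auto simp: S_def intro: open_Times)
  then show ?thesis by (simp add: F_def)
qed

lemma sobolev_modulus_lower_bound:
  fixes p \<gamma> :: real
  assumes p: "p > 0" and modulus: "sobolev_modulus p \<gamma> \<omega>"
    and cont: "continuous_on ({0<..} \<times> {0<..}) (\<lambda>(x, y). \<omega> x y)" and nonneg: "0 \<le> \<omega> x y"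
    and x: "0 < x" and y: "0 < y" and centre: "x\<^sub>0 = x \<or> x\<^sub>0 = y"
    and w: "0 < w" "w \<le> \<bar>ln x - ln y\<bar>"
  defines "\<kappa> \<equiv> 1 - (1 + \<gamma>)/p"
  shows "exp (-4) * w powr (1 - 1/p) * x\<^sub>0 powr \<kappa> \<le> bump_slope * exp (\<bar>\<kappa>\<bar> * w/2) * \<omega> x y"
proof -
  define c where "c = ln x\<^sub>0 - w/2"
  define u where "u = window_bump c w"
  have x0: "x\<^sub>0 > 0" "exp (c + w/2) = x\<^sub>0" using centre x y by (auto simp: c_def)
  have outside: "u t = 0" if "t > 0" "w \<le> \<bar>ln t - ln x\<^sub>0\<bar>" for t
  proof (rule window_bump_eq_0_outside[OF w(1), of t c, folded u_def], rule notI)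
    assume "t \<in> {exp c<..<exp (c+w)}"
    then have "c < ln t" "ln t < c + w"
      using that(1) by (metis greaterThanLessThan_iff exp_less_cancel_iff exp_ln)+
    then show False using that(2) w(1) by (auto simp: c_def abs_if split: if_splits)
  qed
  have "exp (-4) = \<bar>u x - u y\<bar>"
    using centre window_bump_centre[OF w(1), of c] outside[OF x] outside[OF y] w(2)
    by (auto simp: u_def x0 abs_minus_commute)
  also have "\<dots> \<le> \<omega> x y * weighted_energy p \<gamma> u powr (1/p)"
    using sobolev_modulus_pointwise[OF modulus cont window_bump_in_Cc_inf_pos[OF w(1), of c] x y]
    unfolding u_def .
  also have "\<dots> \<le> \<omega> x y * (bump_slope * w powr (1/p - 1) * exp (- \<kappa> * ln x\<^sub>0 + \<bar>\<kappa>\<bar> * w/2))"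
    using weighted_energy_window_bump_root_le[OF p w(1), of \<gamma> c] nonneg
    unfolding u_def \<kappa>_def by (intro mult_left_mono) (auto simp: c_def)
  finally have "exp (-4) * (w powr (1 - 1/p) * x\<^sub>0 powr \<kappa>)
      \<le> \<omega> x y * (bump_slope * w powr (1/p - 1) * exp (- \<kappa> * ln x\<^sub>0 + \<bar>\<kappa>\<bar> * w/2))
          * (w powr (1 - 1/p) * x\<^sub>0 powr \<kappa>)"
    by (intro mult_right_mono) auto
  also have "\<dots> = bump_slope * exp (\<bar>\<kappa>\<bar> * w/2) * \<omega> x y"
    using w(1) x0 by (simp add: powr_def exp_add exp_diff field_simps flip: exp_add)
  finally show ?thesis by (simp add: mult_ac)
qed

section \<open>Comparison with Theta\<close>

lemma Theta_commute: "Theta a b k x y = Theta a b k y x"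
  unfolding Theta_def by (simp add: min.commute max.commute abs_minus_commute)

lemma Theta_same: "Theta a b k x x = 0"
  by (simp add: Theta_def)

lemma Theta_ordered:
  fixes a b r \<kappa> :: real
  assumes a: "0 < a" and ab: "a < b" and r: "0 < r"
  shows "Theta r r \<kappa> a b = (if \<kappa> = 0 then (ln b - ln a) powr r
                             else ((b - a)/b) powr r * (if \<kappa> < 0 then a else b) powr \<kappa>)"
proof -
  have mm: "min a b = a" "max a b = b" "\<bar>a - b\<bar> = b - a" "max b (b - a) = b"
    using a ab by auto
  have pos: "0 < b" "0 < b - a" using a ab by auto
  consider "\<kappa> < 0" | "\<kappa> = 0" | "0 < \<kappa>" "\<kappa> < 1" | "1 \<le> \<kappa>" by linarith
  then show ?thesis
  proof cases
    case 1
    then show ?thesis using a pos by (simp add: Theta_def mm powr_divide powr_minus field_simps)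
  next
    case 2
    have "1 + ((b - a)/a) powr (r/r) = b/a" using a ab r by (simp add: field_simps)
    then show ?thesis using 2 a ab by (simp add: Theta_def mm ln_div)
  next
    case 3
    then show ?thesis using pos by (simp add: Theta_def mm powr_divide powr_diff field_simps)
  next
    case 4
    then show ?thesis using pos by (simp add: Theta_def mm powr_divide field_simps)
  qed
qed

lemma Theta_le_window_ordered:
  fixes a b r \<kappa> :: real
  assumes a: "0 < a" and ab: "a < b" and r: "0 < r"
  shows "\<exists>x\<^sub>0 w. (x\<^sub>0 = a \<or> x\<^sub>0 = b) \<and> 0 < w \<and> w \<le> ln b - ln a \<and> \<bar>\<kappa>\<bar> * w \<le> \<bar>\<kappa>\<bar>
                \<and> Theta r r \<kappa> a b \<le> w powr r * x\<^sub>0 powr \<kappa>"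
proof (cases "\<kappa> = 0")
  case True
  then show ?thesis
    using Theta_ordered[OF a ab r] a ab by (intro exI[of _ a] exI[of _ "ln b - ln a"]) auto
next
  case False
  define w where "w = min (ln b - ln a) 1"
  have "1 - a/b \<le> ln b - ln a"
    using ln_le_minus_one[of "a/b"] a ab by (simp add: ln_div)
  then have "(b - a)/b \<le> w" using a ab by (simp add: w_def field_simps)
  then have "((b - a)/b) powr r \<le> w powr r" using a ab r by (intro powr_mono2) auto
  moreover have "0 < w" using a ab by (simp add: w_def)
  ultimately show ?thesis
    using Theta_ordered[OF a ab r] False
    by (intro exI[of _ "if \<kappa> < 0 then a else b"] exI[of _ w])
       (auto simp: w_def intro: mult_right_mono)
qed

lemma Theta_le_window:
  fixes x y r \<kappa> :: real
  assumes x: "0 < x" and y: "0 < y" and "x \<noteq> y" and r: "0 < r"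
  shows "\<exists>x\<^sub>0 w. (x\<^sub>0 = x \<or> x\<^sub>0 = y) \<and> 0 < w \<and> w \<le> \<bar>ln x - ln y\<bar> \<and> \<bar>\<kappa>\<bar> * w \<le> \<bar>\<kappa>\<bar>
                \<and> Theta r r \<kappa> x y \<le> w powr r * x\<^sub>0 powr \<kappa>"
proof (cases "x < y")
  case True
  then have "\<bar>ln x - ln y\<bar> = ln y - ln x" using x by simp
  then show ?thesis using Theta_le_window_ordered[OF x True r, of \<kappa>] by metis
next
  case False
  then have yx: "y < x" using assms(3) by simp
  then have "\<bar>ln x - ln y\<bar> = ln x - ln y" using y by simp
  then show ?thesis
    using Theta_le_window_ordered[OF y yx r, of \<kappa>] Theta_commute[of r r \<kappa> x y] by metis
qed

lemma sobolev_modulus_ge_Theta: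
  fixes p \<gamma> :: real
  assumes p: "1 < p" and modulus: "sobolev_modulus p \<gamma> \<omega>"
    and cont: "continuous_on ({0<..} \<times> {0<..}) (\<lambda>(x, y). \<omega> x y)" and nonneg: "0 \<le> \<omega> x y"
    and x: "0 < x" and y: "0 < y"
  defines "\<kappa> \<equiv> 1 - (1 + \<gamma>)/p"
  shows "exp (-4) / (bump_slope * exp (\<bar>\<kappa>\<bar>/2)) * Theta (1 - 1/p) (1 - 1/p) \<kappa> x y \<le> \<omega> x y"
proof (cases "x = y")
  case True
  then show ?thesis using nonneg by (simp add: Theta_same)
next
  case False
  define C where "C = exp (-4) / (bump_slope * exp (\<bar>\<kappa>\<bar>/2))"
  have slope: "0 < bump_slope" using bump_slope_ge_1 by linarith
  obtain x\<^sub>0 w where window: "x\<^sub>0 = x \<or> x\<^sub>0 = y" "0 < w" "w \<le> \<bar>ln x - ln y\<bar>" "\<bar>\<kappa>\<bar> * w \<le> \<bar>\<kappa>\<bar>"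
    and Theta_le: "Theta (1 - 1/p) (1 - 1/p) \<kappa> x y \<le> w powr (1 - 1/p) * x\<^sub>0 powr \<kappa>"
    using Theta_le_window[OF x y False, of "1 - 1/p" \<kappa>] p by auto
  have "C * Theta (1 - 1/p) (1 - 1/p) \<kappa> x y \<le> C * (w powr (1 - 1/p) * x\<^sub>0 powr \<kappa>)"
    using Theta_le slope by (intro mult_left_mono) (auto simp: C_def)
  also have "\<dots> \<le> exp (-4) * w powr (1 - 1/p) * x\<^sub>0 powr \<kappa> / (bump_slope * exp (\<bar>\<kappa>\<bar> * w/2))"
    using window(4) slope by (simp add: C_def divide_left_mono frac_le)
  also have "\<dots> \<le> \<omega> x y"
    using sobolev_modulus_lower_bound[OF _ modulus cont nonneg x y window(1-3)] p slope
    by (simp add: \<kappa>_def divide_le_eq mult_ac)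
  finally show ?thesis by (simp add: C_def)
qed

theorem theorem1p3:
  fixes \<gamma> p :: real
  assumes "1 < p"
  shows "\<exists>C>0. \<forall>\<omega> :: real \<Rightarrow> real \<Rightarrow> real.
     (continuous_on ({0<..} \<times> {0<..}) (\<lambda>(x, y). \<omega> x y)
      \<and> (\<forall>x>0. \<forall>y>0. 0 \<le> \<omega> x y)
      \<and> (\<forall>u \<in> Cc_inf_pos. AE z in lborel. z \<in> {0<..} \<times> {0<..} \<longrightarrow>
            \<bar>u (fst z) - u (snd z)\<bar>
              \<le> \<omega> (fst z) (snd z) *
                 (integral {0<..} (\<lambda>t. \<bar>deriv u t\<bar> powr p * t powr \<gamma>)) powr (1 / p)))
     \<longrightarrow> (\<forall>x>0. \<forall>y>0.
            \<omega> x y \<ge> C * Theta (1 - 1/p) (1 - 1/p) (1 - (1 + \<gamma>)/p) x y)"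
proof -
  define C where "C = exp (-4) / (bump_slope * exp (\<bar>1 - (1 + \<gamma>)/p\<bar>/2))"
  have "0 < bump_slope" using bump_slope_ge_1 by linarith
  then have "0 < C" by (simp add: C_def)
  moreover have "C * Theta (1 - 1/p) (1 - 1/p) (1 - (1 + \<gamma>)/p) x y \<le> \<omega> x y"
    if "continuous_on ({0<..} \<times> {0<..}) (\<lambda>(x, y). \<omega> x y)" "\<forall>x>0. \<forall>y>0. 0 \<le> \<omega> x y"
      "sobolev_modulus p \<gamma> \<omega>" "0 < x" "0 < y"
    for \<omega> :: "real \<Rightarrow> real \<Rightarrow> real" and x y
    using sobolev_modulus_ge_Theta[OF assms that(3,1) _ that(4,5)] that(2,4,5) by (simp add: C_def)
  ultimately show ?thesis
    unfolding sobolev_modulus_def weighted_energy_def by blast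
qed

end
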